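(* Let $0<c\le1$ and for $\ell>0$ let $g_c(\ell)=c\ell^2\beta_c(\ell)$ with $\beta_c(\ell)=4\int_0^\infty u^2\,\Phi\big(-\frac{\ell u}{c\sqrt2}\big)\phi(u)\,du$. Then $g_c$ is maximized at $\ell_{opt}=\frac{2.426c}{\sqrt2}=1.715c$ (to three decimals), and $$\alpha_{opt}=4\int_0^\infty\Phi\Big(-\frac{\ell_{opt}u}{c\sqrt2}\Big)\phi(u)\,du=0.439$$ up to three decimal places.
   Context: $\Phi,\phi$ are the standard normal cdf and density. $g_c$ is the diffusion speed of the limiting SDE of additive TMCMC-within-Gibbs for targets absolutely continuous with respect to a Gaussian measure, and $\alpha_{opt}$ the corresponding optimal acceptance rate. *)

theory Defs
  imports "HOL-Probability.Probability"
begin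

definition Phi :: "real \<Rightarrow> real" where
  "Phi x = (LINT t:{..x}|lborel. std_normal_density t)"

definition beta_c :: "real \<Rightarrow> real \<Rightarrow> real" where
  "beta_c c l = 4 * (LINT u:{0<..}|lborel.
      u\<^sup>2 * Phi (- (l * u) / (c * sqrt 2)) * std_normal_density u)"

definition g_c :: "real \<Rightarrow> real \<Rightarrow> real" where
  "g_c c l = c * l\<^sup>2 * beta_c c l"

definition alpha_c :: "real \<Rightarrow> real \<Rightarrow> real" where
  "alpha_c c l = 4 * (LINT u:{0<..}|lborel.
      Phi (- (l * u) / (c * sqrt 2)) * std_normal_density u)"

end

theory Submission
  imports Defs "HOL-Real_Asymp.Real_Asymp"
begin

text \<open>
  Writing \<open>\<Phi>(-a u) = \<integral>\<^sub>a\<^sup>\<infinity> u \<phi>(u y) dy\<close> for \<open>u > 0\<close> and swapping the order of integration,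
  the inner integrals over \<open>u\<close> are elementary Gaussian moments of \<open>\<phi>(u) \<phi>(u y)\<close> and leave
  rational functions of \<open>y\<close>. Hence, with \<open>a = \<ell> / (c \<surd>2)\<close> and
  \<open>P(a) = \<pi>/2 - arctan a - a / (1 + a\<^sup>2)\<close>, one gets \<open>\<alpha>\<^sub>c(\<ell>) = 1 - 2 arctan a / \<pi>\<close> and
  \<open>g\<^sub>c(\<ell>) = (4 c\<^sup>3 / \<pi>) h(a)\<close> with \<open>h(a) = a\<^sup>2 P(a)\<close>. Now \<open>h' = 2 a q\<close> with
  \<open>q(a) = P(a) - a / (1 + a\<^sup>2)\<^sup>2\<close>, and \<open>q\<close> decreases on \<open>[0, \<surd>3]\<close> and increases to \<open>0\<close> on
  \<open>[\<surd>3, \<infinity>)\<close>, so it has a single zero \<open>s \<approx> 1.213\<close>, the unique maximiser of \<open>h\<close>.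
  The numerical claims follow from bounds on \<open>arctan\<close> obtained by expanding around \<open>1\<close>.
  Here \<open>P\<close>, \<open>h\<close> and \<open>q\<close> are \<open>beta_tail\<close>, \<open>scaled_speed\<close> and \<open>speed_slope\<close>.
\<close>

lemma integrable_std_normal_density: "integrable lborel std_normal_density"
  using integrable_std_normal_moment[of 0] by simp

lemma ennreal_Phi:
  "ennreal (Phi x) = (\<integral>\<^sup>+t. ennreal (std_normal_density t) * indicator {..x} t \<partial>lborel)"
proof -
  have "Phi x = (\<integral>t. indicator {..x} t * std_normal_density t \<partial>lborel)"
    by (simp add: Phi_def set_lebesgue_integral_def)
  also have "ennreal \<dots> = (\<integral>\<^sup>+t. ennreal (indicator {..x} t * std_normal_density t) \<partial>lborel)"
    using integrable_mult_indicator[OF _ integrable_std_normal_density, of "{..x}"]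
    by (intro nn_integral_eq_integral[symmetric]) auto
  finally show ?thesis
    by (auto intro!: nn_integral_cong split: split_indicator)
qed

lemma Phi_nonneg: "0 \<le> Phi x"
  unfolding Phi_def set_lebesgue_integral_def by (intro integral_nonneg_AE) auto

lemma mono_Phi: "mono Phi"
proof
  fix x y :: real
  assume "x \<le> y"
  then have "ennreal (Phi x) \<le> ennreal (Phi y)"
    unfolding ennreal_Phi by (intro nn_integral_mono) (auto split: split_indicator)
  then show "Phi x \<le> Phi y"
    using Phi_nonneg by (simp add: ennreal_le_iff)
qed

lemma borel_measurable_Phi [measurable]: "Phi \<in> borel_measurable borel"
  by (rule borel_measurable_mono[OF mono_Phi])

lemma ennreal_Phi_neg_mult:
  assumes "0 < u"
  shows "ennreal (Phi (- (a * u))) =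
    (\<integral>\<^sup>+y. ennreal (u * std_normal_density (u * y)) * indicator {a..} y \<partial>lborel)"
proof -
  have "ennreal (Phi (- (a * u))) = ennreal u *
      (\<integral>\<^sup>+y. ennreal (std_normal_density (- u * y)) * indicator {..- (a * u)} (- u * y) \<partial>lborel)"
    unfolding ennreal_Phi
    using assms nn_integral_real_affine[of "\<lambda>t. ennreal (std_normal_density t) * indicator {..- (a * u)} t"
        "- u" 0]
    by simp
  also have "\<dots> = ennreal u *
      (\<integral>\<^sup>+y. ennreal (std_normal_density (u * y)) * indicator {a..} y \<partial>lborel)"
    using assms by (intro arg_cong2[where f="(*)"] nn_integral_cong refl)
      (auto simp: std_normal_density_def mult.commute split: split_indicator)
  also have "\<dots> = (\<integral>\<^sup>+y. ennreal (u * std_normal_density (u * y)) * indicator {a..} y \<partial>lborel)"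
    using assms by (subst nn_integral_cmult[symmetric]) (auto simp: ennreal_mult mult.assoc)
  finally show ?thesis .
qed

lemma set_integral_Phi_neg_mult_eq_iterated:
  assumes [measurable]: "w \<in> borel_measurable borel" and w_nonneg: "\<And>u. 0 \<le> w u"
  shows "(LINT u:{0<..}|lborel. w u * Phi (- (a * u)) * std_normal_density u) =
    enn2real (\<integral>\<^sup>+y. (\<integral>\<^sup>+u. ennreal (w u * u * std_normal_density u * std_normal_density (u * y))
      * indicator {0<..} u \<partial>lborel) * indicator {a..} y \<partial>lborel)"
proof -
  let ?F = "\<lambda>u y. ennreal (w u * u * std_normal_density u * std_normal_density (u * y))
    * indicator {0<..} u * indicator {a..} y"
  have "(LINT u:{0<..}|lborel. w u * Phi (- (a * u)) * std_normal_density u) =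
      enn2real (\<integral>\<^sup>+u. ennreal (indicator {0<..} u * (w u * Phi (- (a * u)) * std_normal_density u)) \<partial>lborel)"
    unfolding set_lebesgue_integral_def real_scaleR_def
    by (rule integral_eq_nn_integral) (auto simp: w_nonneg Phi_nonneg)
  also have "(\<integral>\<^sup>+u. ennreal (indicator {0<..} u * (w u * Phi (- (a * u)) * std_normal_density u)) \<partial>lborel)
      = (\<integral>\<^sup>+u. (\<integral>\<^sup>+y. ?F u y \<partial>lborel) \<partial>lborel)"
  proof (intro nn_integral_cong)
    fix u :: real
    show "ennreal (indicator {0<..} u * (w u * Phi (- (a * u)) * std_normal_density u)) =
        (\<integral>\<^sup>+y. ?F u y \<partial>lborel)"
    proof (cases "0 < u")
      case True
      have "ennreal (indicator {0<..} u * (w u * Phi (- (a * u)) * std_normal_density u))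
          = ennreal (w u * std_normal_density u) * ennreal (Phi (- (a * u)))"
        using True by (simp add: ennreal_mult[symmetric] w_nonneg Phi_nonneg mult_ac)
      also have "\<dots> = (\<integral>\<^sup>+y. ennreal (w u * std_normal_density u) *
          (ennreal (u * std_normal_density (u * y)) * indicator {a..} y) \<partial>lborel)"
        unfolding ennreal_Phi_neg_mult[OF True] by (rule nn_integral_cmult[symmetric]) auto
      also have "\<dots> = (\<integral>\<^sup>+y. ?F u y \<partial>lborel)"
        using True by (intro nn_integral_cong) (simp add: ennreal_mult[symmetric] w_nonneg mult_ac)
      finally show ?thesis .
    qed auto
  qed
  also have "\<dots> = (\<integral>\<^sup>+y. (\<integral>\<^sup>+u. ?F u y \<partial>lborel) \<partial>lborel)"
    by (rule lborel_pair.Fubini'[symmetric]) measurable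
  also have "\<dots> = (\<integral>\<^sup>+y. (\<integral>\<^sup>+u. ennreal (w u * u * std_normal_density u * std_normal_density (u * y))
      * indicator {0<..} u \<partial>lborel) * indicator {a..} y \<partial>lborel)"
    by (intro nn_integral_cong nn_integral_multc) measurable
  finally show ?thesis .
qed

lemma std_normal_density_mult:
  "std_normal_density u * std_normal_density (u * y) = exp (- ((1 + y\<^sup>2) * u\<^sup>2 / 2)) / (2 * pi)"
  by (simp add: std_normal_density_def mult_exp_exp field_simps power_mult_distrib
      real_sqrt_mult[symmetric])

lemma nn_integral_x_exp_neg_sq:
  assumes "0 < k"
  shows "(\<integral>\<^sup>+u. ennreal (u * exp (- (k * u\<^sup>2 / 2))) * indicator {0..} u \<partial>lborel) = ennreal (1 / k)"
proof -
  have "(\<integral>\<^sup>+u. ennreal (u * exp (- (k * u\<^sup>2 / 2))) * indicator {0..} u \<partial>lborel) =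
      ennreal (0 - (- exp (- (k * 0\<^sup>2 / 2)) / k))"
  proof (rule nn_integral_FTC_atLeast)
    show "((\<lambda>u. - exp (- (k * u\<^sup>2 / 2)) / k) \<longlongrightarrow> 0) at_top"
      using assms by real_asymp
    show "((\<lambda>u. - exp (- (k * u\<^sup>2 / 2)) / k) has_real_derivative x * exp (- (k * x\<^sup>2 / 2))) (at x)"
      for x
      using assms by (auto intro!: derivative_eq_intros simp: field_simps)
  qed auto
  then show ?thesis
    by simp
qed

lemma nn_integral_cube_exp_neg_sq:
  assumes "0 < k"
  shows "(\<integral>\<^sup>+u. ennreal (u ^ 3 * exp (- (k * u\<^sup>2 / 2))) * indicator {0..} u \<partial>lborel) =
    ennreal (2 / k\<^sup>2)"
proof -
  let ?F = "\<lambda>u. - ((u\<^sup>2 / k + 2 / k\<^sup>2) * exp (- (k * u\<^sup>2 / 2)))"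
  have "(\<integral>\<^sup>+u. ennreal (u ^ 3 * exp (- (k * u\<^sup>2 / 2))) * indicator {0..} u \<partial>lborel) = ennreal (0 - ?F 0)"
  proof (rule nn_integral_FTC_atLeast)
    show "(?F \<longlongrightarrow> 0) at_top"
      using assms by real_asymp
    show "(?F has_real_derivative x ^ 3 * exp (- (k * x\<^sup>2 / 2))) (at x)" for x
      using assms
      by (auto intro!: derivative_eq_intros simp: field_simps power2_eq_square power3_eq_cube)
  qed auto
  then show ?thesis
    by simp
qed

lemma nn_integral_std_normal_density_product:
  "(\<integral>\<^sup>+u. ennreal (u * std_normal_density u * std_normal_density (u * y)) * indicator {0<..} u \<partial>lborel)
    = ennreal (1 / (2 * pi * (1 + y\<^sup>2)))"
proof -
  define k where "k = 1 + y\<^sup>2"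
  have k: "0 < k"
    unfolding k_def by (simp add: add_pos_nonneg)
  have "(\<integral>\<^sup>+u. ennreal (u * std_normal_density u * std_normal_density (u * y)) * indicator {0<..} u \<partial>lborel)
      = (\<integral>\<^sup>+u. ennreal (1 / (2 * pi)) * (ennreal (u * exp (- (k * u\<^sup>2 / 2))) * indicator {0..} u) \<partial>lborel)"
    by (intro nn_integral_cong)
      (auto simp: mult.assoc std_normal_density_mult k_def ennreal_mult[symmetric] split: split_indicator)
  also have "\<dots> = ennreal (1 / (2 * pi) * (1 / k))"
    by (simp add: nn_integral_cmult nn_integral_x_exp_neg_sq[OF k] ennreal_mult'[symmetric])
  finally show ?thesis
    by (simp add: k_def)
qed

lemma nn_integral_cube_std_normal_density_product:
  "(\<integral>\<^sup>+u. ennreal (u\<^sup>2 * u * std_normal_density u * std_normal_density (u * y)) * indicator {0<..} u \<partial>lborel)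
    = ennreal (1 / (pi * (1 + y\<^sup>2)\<^sup>2))"
proof -
  define k where "k = 1 + y\<^sup>2"
  have k: "0 < k"
    unfolding k_def by (simp add: add_pos_nonneg)
  have "(\<integral>\<^sup>+u. ennreal (u\<^sup>2 * u * std_normal_density u * std_normal_density (u * y)) * indicator {0<..} u \<partial>lborel)
      = (\<integral>\<^sup>+u. ennreal (1 / (2 * pi)) * (ennreal (u ^ 3 * exp (- (k * u\<^sup>2 / 2))) * indicator {0..} u) \<partial>lborel)"
    by (intro nn_integral_cong)
      (auto simp: mult.assoc std_normal_density_mult k_def ennreal_mult[symmetric]
        power3_eq_cube power2_eq_square split: split_indicator)
  also have "\<dots> = ennreal (1 / (2 * pi) * (2 / k\<^sup>2))"
    by (simp add: nn_integral_cmult nn_integral_cube_exp_neg_sq[OF k] ennreal_mult'[symmetric])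
  finally show ?thesis
    by (simp add: k_def)
qed

definition beta_tail :: "real \<Rightarrow> real" where
  "beta_tail a = pi / 2 - arctan a - a / (1 + a\<^sup>2)"

lemma has_real_derivative_frac_one_plus_sq:
  "((\<lambda>a. a / (1 + a\<^sup>2)) has_real_derivative (1 - x\<^sup>2) / (1 + x\<^sup>2)\<^sup>2) (at x)"
proof -
  have "0 < 1 + x\<^sup>2"
    by (simp add: add_pos_nonneg)
  then show ?thesis
    by (auto intro!: derivative_eq_intros simp: field_simps power2_eq_square)
qed

lemma has_real_derivative_beta_tail: "(beta_tail has_real_derivative - 2 / (1 + x\<^sup>2)\<^sup>2) (at x)"
proof -
  have deriv: "(beta_tail has_real_derivative 0 - 1 / (1 + x\<^sup>2) - (1 - x\<^sup>2) / (1 + x\<^sup>2)\<^sup>2) (at x)"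
    unfolding beta_tail_def[abs_def]
    by (intro DERIV_diff DERIV_const has_real_derivative_frac_one_plus_sq)
      (use DERIV_arctan[of x] in \<open>simp add: inverse_eq_divide\<close>)
  have quotient: "0 - 1 / z - (2 - z) / z\<^sup>2 = - 2 / z\<^sup>2" if "0 < z" for z :: real
    using that by (simp add: field_simps power2_eq_square)
  from quotient[of "1 + x\<^sup>2"] deriv show ?thesis
    by (simp add: add_pos_nonneg)
qed

lemma tendsto_beta_tail_at_top: "(beta_tail \<longlongrightarrow> 0) at_top"
proof -
  have "((\<lambda>a. pi / 2 - arctan a - a / (1 + a\<^sup>2)) \<longlongrightarrow> pi / 2 - pi / 2 - 0) at_top"
    by (intro tendsto_intros tendsto_arctan_at_top) real_asymp
  then show ?thesis
    by (simp add: beta_tail_def[abs_def])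
qed

lemma beta_tail_pos: "0 < beta_tail a"
proof (rule DERIV_neg_imp_decreasing_at_top[OF _ tendsto_beta_tail_at_top])
  fix x :: real
  have "0 < 1 + x\<^sup>2"
    by (simp add: add_pos_nonneg)
  then have "- 2 / (1 + x\<^sup>2)\<^sup>2 < 0"
    by simp
  then show "\<exists>y. (beta_tail has_real_derivative y) (at x) \<and> y < 0"
    using has_real_derivative_beta_tail by blast
qed

lemma nn_integral_Cauchy_density_tail:
  "(\<integral>\<^sup>+y. ennreal (1 / (2 * pi * (1 + y\<^sup>2))) * indicator {a..} y \<partial>lborel) =
    ennreal ((pi / 2 - arctan a) / (2 * pi))"
proof -
  have "(\<integral>\<^sup>+y. ennreal (1 / (2 * pi * (1 + y\<^sup>2))) * indicator {a..} y \<partial>lborel) =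
      ennreal ((pi / 2) / (2 * pi) - arctan a / (2 * pi))"
  proof (rule nn_integral_FTC_atLeast)
    show "((\<lambda>y. arctan y / (2 * pi)) \<longlongrightarrow> (pi / 2) / (2 * pi)) at_top"
      by (intro tendsto_intros tendsto_arctan_at_top) simp
    show "((\<lambda>y. arctan y / (2 * pi)) has_real_derivative 1 / (2 * pi * (1 + x\<^sup>2))) (at x)" for x
      by (auto intro!: derivative_eq_intros simp: field_simps add_nonneg_eq_0_iff)
  qed (auto simp: add_pos_nonneg)
  then show ?thesis
    by (simp add: diff_divide_distrib)
qed

lemma nn_integral_sq_Cauchy_density_tail:
  "(\<integral>\<^sup>+y. ennreal (1 / (pi * (1 + y\<^sup>2)\<^sup>2)) * indicator {a..} y \<partial>lborel) =
    ennreal (beta_tail a / (2 * pi))"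
proof -
  have "(\<integral>\<^sup>+y. ennreal (1 / (pi * (1 + y\<^sup>2)\<^sup>2)) * indicator {a..} y \<partial>lborel) =
      ennreal (0 - (- beta_tail a / (2 * pi)))"
  proof (rule nn_integral_FTC_atLeast)
    show "((\<lambda>y. - beta_tail y / (2 * pi)) \<longlongrightarrow> 0) at_top"
      using tendsto_divide[OF tendsto_minus[OF tendsto_beta_tail_at_top] tendsto_const, of "2 * pi"]
      by simp
    show "((\<lambda>y. - beta_tail y / (2 * pi)) has_real_derivative 1 / (pi * (1 + x\<^sup>2)\<^sup>2)) (at x)" for x
      using DERIV_cdivide[OF DERIV_minus[OF has_real_derivative_beta_tail], of "2 * pi"]
      by (simp add: mult.commute)
  qed (auto simp: add_pos_nonneg)
  then show ?thesis
    by simp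
qed

lemma alpha_c_eq: "alpha_c c l = 1 - 2 * arctan (l / (c * sqrt 2)) / pi"
proof -
  define a where "a = l / (c * sqrt 2)"
  have "alpha_c c l = 4 * (LINT u:{0<..}|lborel. 1 * Phi (- (a * u)) * std_normal_density u)"
    by (simp add: alpha_c_def a_def)
  also have "\<dots> = 4 * enn2real (\<integral>\<^sup>+y. (\<integral>\<^sup>+u. ennreal (1 * u * std_normal_density u *
      std_normal_density (u * y)) * indicator {0<..} u \<partial>lborel) * indicator {a..} y \<partial>lborel)"
    by (subst set_integral_Phi_neg_mult_eq_iterated) auto
  also have "\<dots> = 4 * ((pi / 2 - arctan a) / (2 * pi))"
    using arctan_ubound[of a]
    unfolding mult_1 nn_integral_std_normal_density_product nn_integral_Cauchy_density_tail by simp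
  finally show ?thesis
    by (simp add: a_def field_simps)
qed

lemma beta_c_eq: "beta_c c l = 2 / pi * beta_tail (l / (c * sqrt 2))"
proof -
  define a where "a = l / (c * sqrt 2)"
  have "beta_c c l = 4 * (LINT u:{0<..}|lborel. u\<^sup>2 * Phi (- (a * u)) * std_normal_density u)"
    by (simp add: beta_c_def a_def)
  also have "\<dots> = 4 * enn2real (\<integral>\<^sup>+y. (\<integral>\<^sup>+u. ennreal (u\<^sup>2 * u * std_normal_density u *
      std_normal_density (u * y)) * indicator {0<..} u \<partial>lborel) * indicator {a..} y \<partial>lborel)"
    by (subst set_integral_Phi_neg_mult_eq_iterated) auto
  also have "\<dots> = 4 * (beta_tail a / (2 * pi))"
    using beta_tail_pos[of a]
    unfolding nn_integral_cube_std_normal_density_product nn_integral_sq_Cauchy_density_tail by simp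
  finally show ?thesis
    by (simp add: a_def)
qed

definition scaled_speed :: "real \<Rightarrow> real" where
  "scaled_speed a = a\<^sup>2 * beta_tail a"

definition speed_slope :: "real \<Rightarrow> real" where
  "speed_slope a = beta_tail a - a / (1 + a\<^sup>2)\<^sup>2"

lemma g_c_eq_scaled_speed:
  assumes "0 < c"
  shows "g_c c l = 4 * c ^ 3 / pi * scaled_speed (l / (c * sqrt 2))"
proof -
  define a where "a = l / (c * sqrt 2)"
  have "l = a * c * sqrt 2"
    using assms by (simp add: a_def)
  then have "l\<^sup>2 = 2 * a\<^sup>2 * c\<^sup>2"
    by (simp add: power_mult_distrib)
  then show ?thesis
    unfolding g_c_def beta_c_eq scaled_speed_def a_def[symmetric]
    by (simp add: power3_eq_cube power2_eq_square)
qed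

lemma has_real_derivative_scaled_speed:
  "(scaled_speed has_real_derivative 2 * x * speed_slope x) (at x)"
proof -
  have "(scaled_speed has_real_derivative 2 * x * beta_tail x + x\<^sup>2 * (- 2 / (1 + x\<^sup>2)\<^sup>2)) (at x)"
    unfolding scaled_speed_def[abs_def]
    by (auto intro!: derivative_eq_intros has_real_derivative_beta_tail)
  then show ?thesis
    by (simp add: speed_slope_def algebra_simps power2_eq_square)
qed

lemma has_real_derivative_frac_one_plus_sq_sq:
  "((\<lambda>a. a / (1 + a\<^sup>2)\<^sup>2) has_real_derivative (1 - 3 * x\<^sup>2) / (1 + x\<^sup>2) ^ 3) (at x)"
proof -
  have pos: "0 < 1 + x\<^sup>2"
    by (simp add: add_pos_nonneg)
  have deriv: "((\<lambda>a. a / (1 + a\<^sup>2)\<^sup>2) has_real_derivative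
      ((1 + x\<^sup>2)\<^sup>2 - x * (2 * (1 + x\<^sup>2) * (2 * x))) / ((1 + x\<^sup>2)\<^sup>2 * (1 + x\<^sup>2)\<^sup>2)) (at x)"
    using pos by (auto intro!: derivative_eq_intros simp: power2_eq_square)
  have quotient: "(z\<^sup>2 - x * (2 * z * (2 * x))) / (z\<^sup>2 * z\<^sup>2) = (z - 4 * x\<^sup>2) / z ^ 3"
    if "0 < z" for z :: real
    using that by (simp add: field_simps power2_eq_square power3_eq_cube)
  have "((1 + x\<^sup>2)\<^sup>2 - x * (2 * (1 + x\<^sup>2) * (2 * x))) / ((1 + x\<^sup>2)\<^sup>2 * (1 + x\<^sup>2)\<^sup>2) =
      (1 - 3 * x\<^sup>2) / (1 + x\<^sup>2) ^ 3"
    unfolding quotient[OF pos] by simp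
  with deriv show ?thesis
    by simp
qed

lemma has_real_derivative_speed_slope:
  "(speed_slope has_real_derivative (x\<^sup>2 - 3) / (1 + x\<^sup>2) ^ 3) (at x)"
proof -
  have deriv: "(speed_slope has_real_derivative
      - 2 / (1 + x\<^sup>2)\<^sup>2 - (1 - 3 * x\<^sup>2) / (1 + x\<^sup>2) ^ 3) (at x)"
    unfolding speed_slope_def[abs_def]
    by (intro DERIV_diff has_real_derivative_beta_tail has_real_derivative_frac_one_plus_sq_sq)
  have quotient: "- 2 / z\<^sup>2 - (1 - 3 * x\<^sup>2) / z ^ 3 = (- 2 * z - 1 + 3 * x\<^sup>2) / z ^ 3"
    if "0 < z" for z :: real
    using that by (simp add: field_simps power2_eq_square power3_eq_cube)
  from quotient[of "1 + x\<^sup>2"] deriv show ?thesis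
    by (simp add: add_pos_nonneg algebra_simps)
qed

lemma isCont_speed_slope: "isCont speed_slope x"
  using has_real_derivative_speed_slope by (rule DERIV_isCont)

lemma speed_slope_strict_antimono:
  assumes "0 \<le> x" "x < y" "y \<le> sqrt 3"
  shows "speed_slope y < speed_slope x"
proof (rule DERIV_neg_imp_decreasing_open[OF \<open>x < y\<close>])
  fix z
  assume "x < z" "z < y"
  with assms have "z\<^sup>2 < (sqrt 3)\<^sup>2"
    by (intro power_strict_mono) auto
  then have "(z\<^sup>2 - 3) / (1 + z\<^sup>2) ^ 3 < 0"
    by (simp add: divide_neg_pos add_pos_nonneg)
  then show "\<exists>d. (speed_slope has_real_derivative d) (at z) \<and> d < 0"
    using has_real_derivative_speed_slope by blast
qed (intro continuous_at_imp_continuous_on ballI isCont_speed_slope)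

lemma speed_slope_neg:
  assumes "sqrt 3 < x"
  shows "speed_slope x < 0"
proof -
  have "((\<lambda>a::real. a / (1 + a\<^sup>2)\<^sup>2) \<longlongrightarrow> 0) at_top"
    by real_asymp
  then have "((\<lambda>a. - speed_slope a) \<longlongrightarrow> - (0 - 0)) at_top"
    unfolding speed_slope_def by (intro tendsto_intros tendsto_beta_tail_at_top)
  moreover have "\<exists>d. ((\<lambda>a. - speed_slope a) has_real_derivative d) (at z) \<and> d < 0" if "x \<le> z" for z
  proof -
    have "(sqrt 3)\<^sup>2 < z\<^sup>2"
      using assms that by (intro power_strict_mono) auto
    then have "- ((z\<^sup>2 - 3) / (1 + z\<^sup>2) ^ 3) < 0"
      by (simp add: add_pos_nonneg)
    then show ?thesis
      using DERIV_minus[OF has_real_derivative_speed_slope] by blast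
  qed
  ultimately have "- (0 - 0) < - speed_slope x"
    using DERIV_neg_imp_decreasing_at_top[of x "\<lambda>a. - speed_slope a"] by blast
  then show ?thesis
    by simp
qed

lemma arctan_ge_taylor7:
  assumes "0 \<le> t"
  shows "t - t ^ 3 / 3 + t ^ 5 / 5 - t ^ 7 / 7 \<le> arctan t"
proof -
  let ?f = "\<lambda>x. arctan x - (x - x ^ 3 / 3 + x ^ 5 / 5 - x ^ 7 / 7)"
  have "?f 0 \<le> ?f t"
  proof (rule DERIV_nonneg_imp_nondecreasing[OF assms])
    fix x :: real
    have "(?f has_real_derivative 1 / (1 + x\<^sup>2) - (1 - x\<^sup>2 + x ^ 4 - x ^ 6)) (at x)"
      by (rule derivative_eq_intros refl | use DERIV_arctan[of x] in \<open>simp add: inverse_eq_divide\<close>)+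
    moreover have "0 < 1 + x\<^sup>2"
      by (simp add: add_pos_nonneg)
    then have "1 / (1 + x\<^sup>2) - (1 - x\<^sup>2 + x ^ 4 - x ^ 6) = x ^ 8 / (1 + x\<^sup>2)"
      by (simp add: field_simps)
    ultimately show "\<exists>y. (?f has_real_derivative y) (at x) \<and> 0 \<le> y"
      by auto
  qed
  then show ?thesis
    by simp
qed

lemma arctan_le_taylor5:
  assumes "0 \<le> t"
  shows "arctan t \<le> t - t ^ 3 / 3 + t ^ 5 / 5"
proof -
  let ?f = "\<lambda>x. (x - x ^ 3 / 3 + x ^ 5 / 5) - arctan x"
  have "?f 0 \<le> ?f t"
  proof (rule DERIV_nonneg_imp_nondecreasing[OF assms])
    fix x :: real
    have "(?f has_real_derivative (1 - x\<^sup>2 + x ^ 4) - 1 / (1 + x\<^sup>2)) (at x)"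
      by (rule derivative_eq_intros refl | use DERIV_arctan[of x] in \<open>simp add: inverse_eq_divide\<close>)+
    moreover have "0 < 1 + x\<^sup>2"
      by (simp add: add_pos_nonneg)
    then have "(1 - x\<^sup>2 + x ^ 4) - 1 / (1 + x\<^sup>2) = x ^ 6 / (1 + x\<^sup>2)"
      by (simp add: field_simps)
    ultimately show "\<exists>y. (?f has_real_derivative y) (at x) \<and> 0 \<le> y"
      by auto
  qed
  then show ?thesis
    by simp
qed

lemma arctan_eq_pi_div_4_add:
  assumes "0 < a"
  shows "arctan a = pi / 4 + arctan ((a - 1) / (a + 1))"
proof -
  have "\<bar>(a - 1) / (a + 1)\<bar> < 1"
    using assms by (simp add: abs_less_iff field_simps)
  then have "arctan 1 + arctan ((a - 1) / (a + 1)) =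
      arctan ((1 + (a - 1) / (a + 1)) / (1 - 1 * ((a - 1) / (a + 1))))"
    by (intro arctan_add) auto
  also have "(1 + (a - 1) / (a + 1)) / (1 - 1 * ((a - 1) / (a + 1))) = a"
    using assms by (simp add: field_simps)
  finally show ?thesis
    by (simp add: arctan_one)
qed

lemma speed_slope_lower_pos: "0 < speed_slope (12128 / 10000)"
proof -
  have "arctan (12128 / 10000) = pi / 4 + arctan (133 / 1383)"
    using arctan_eq_pi_div_4_add[of "12128 / 10000"] by simp
  moreover have "arctan (133 / 1383) \<le> 133 / 1383 - (133 / 1383) ^ 3 / 3 + (133 / 1383) ^ 5 / 5"
    by (rule arctan_le_taylor5) simp
  ultimately show ?thesis
    using pi_approx unfolding speed_slope_def beta_tail_def by (simp add: power_divide)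
qed

lemma speed_slope_upper_neg: "speed_slope (121325 / 100000) < 0"
proof -
  have "arctan (121325 / 100000) = pi / 4 + arctan (853 / 8853)"
    using arctan_eq_pi_div_4_add[of "121325 / 100000"] by simp
  moreover have "853 / 8853 - (853 / 8853) ^ 3 / 3 + (853 / 8853) ^ 5 / 5 - (853 / 8853) ^ 7 / 7
      \<le> arctan (853 / 8853)"
    by (rule arctan_ge_taylor7) simp
  ultimately show ?thesis
    using pi_approx unfolding speed_slope_def beta_tail_def by (simp add: power_divide)
qed

lemma speed_slope_sign_change:
  "\<exists>s. 12128 / 10000 < s \<and> s < 121325 / 100000 \<and>
     (\<forall>z. 0 \<le> z \<and> z < s \<longrightarrow> 0 < speed_slope z) \<and> (\<forall>z. s < z \<longrightarrow> speed_slope z < 0)"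
proof -
  have below_sqrt3: "121325 / 100000 < sqrt 3"
    by (rule real_less_rsqrt) (simp add: power2_eq_square)
  obtain s where s: "12128 / 10000 \<le> s" "s \<le> 121325 / 100000" "speed_slope s = 0"
    using IVT2[of speed_slope "121325 / 100000" 0 "12128 / 10000"] isCont_speed_slope
      speed_slope_lower_pos speed_slope_upper_neg by force
  have s_lower: "12128 / 10000 < s"
    using s speed_slope_lower_pos by (cases "s = 12128 / 10000") auto
  have s_upper: "s < 121325 / 100000"
    using s speed_slope_upper_neg by (cases "s = 121325 / 100000") auto
  have slope_pos: "0 < speed_slope z" if "0 \<le> z" "z < s" for z
    using speed_slope_strict_antimono[of z s] that s below_sqrt3 by simp
  have slope_neg: "speed_slope z < 0" if "s < z" for z
  proof (cases "z \<le> sqrt 3")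
    case True
    then show ?thesis
      using speed_slope_strict_antimono[of s z] that s by simp
  next
    case False
    then show ?thesis
      by (simp add: speed_slope_neg)
  qed
  show ?thesis
    using s_lower s_upper slope_pos slope_neg by blast
qed

lemma scaled_speed_strict_max:
  assumes "0 < s"
    and slope_pos: "\<And>z. 0 \<le> z \<Longrightarrow> z < s \<Longrightarrow> 0 < speed_slope z"
    and slope_neg: "\<And>z. s < z \<Longrightarrow> speed_slope z < 0"
    and "0 < x" "x \<noteq> s"
  shows "scaled_speed x < scaled_speed s"
proof -
  have cont: "continuous_on A scaled_speed" for A
    using has_real_derivative_scaled_speed
    by (intro continuous_at_imp_continuous_on ballI DERIV_isCont)
  consider "x < s" | "s < x"
    using \<open>x \<noteq> s\<close> by linarith
  then show ?thesis
  proof cases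
    case 1
    show ?thesis
    proof (rule DERIV_pos_imp_increasing_open[OF 1 _ cont])
      fix z
      assume "x < z" "z < s"
      then have "0 < 2 * z * speed_slope z"
        using \<open>0 < x\<close> slope_pos by simp
      then show "\<exists>d. (scaled_speed has_real_derivative d) (at z) \<and> 0 < d"
        using has_real_derivative_scaled_speed by blast
    qed
  next
    case 2
    show ?thesis
    proof (rule DERIV_neg_imp_decreasing_open[OF 2 _ cont])
      fix z
      assume "s < z" "z < x"
      then have "2 * z * speed_slope z < 0"
        using \<open>0 < s\<close> slope_neg by (simp add: mult_pos_neg)
      then show "\<exists>d. (scaled_speed has_real_derivative d) (at z) \<and> d < 0"
        using has_real_derivative_scaled_speed by blast
    qed
  qed
qed

lemma alpha_closed_form_bound:
  assumes "12128 / 10000 < s" "s < 121325 / 100000"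
  shows "\<bar>1 - 2 * arctan s / pi - 0.439\<bar> < 0.0005"
proof -
  define t\<^sub>1 :: real where "t\<^sub>1 = 133 / 1383"
  define t\<^sub>2 :: real where "t\<^sub>2 = 853 / 8853"
  have "arctan s > pi / 4 + (t\<^sub>1 - t\<^sub>1 ^ 3 / 3 + t\<^sub>1 ^ 5 / 5 - t\<^sub>1 ^ 7 / 7)"
  proof -
    have "arctan (12128 / 10000) = pi / 4 + arctan t\<^sub>1"
      using arctan_eq_pi_div_4_add[of "12128 / 10000"] by (simp add: t\<^sub>1_def)
    moreover have "t\<^sub>1 - t\<^sub>1 ^ 3 / 3 + t\<^sub>1 ^ 5 / 5 - t\<^sub>1 ^ 7 / 7 \<le> arctan t\<^sub>1"
      by (rule arctan_ge_taylor7) (simp add: t\<^sub>1_def)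
    moreover have "arctan (12128 / 10000) < arctan s"
      using assms(1) by (simp add: arctan_less_iff)
    ultimately show ?thesis
      by simp
  qed
  moreover have "arctan s < pi / 4 + (t\<^sub>2 - t\<^sub>2 ^ 3 / 3 + t\<^sub>2 ^ 5 / 5)"
  proof -
    have "arctan (121325 / 100000) = pi / 4 + arctan t\<^sub>2"
      using arctan_eq_pi_div_4_add[of "121325 / 100000"] by (simp add: t\<^sub>2_def)
    moreover have "arctan t\<^sub>2 \<le> t\<^sub>2 - t\<^sub>2 ^ 3 / 3 + t\<^sub>2 ^ 5 / 5"
      by (rule arctan_le_taylor5) (simp add: t\<^sub>2_def)
    moreover have "arctan s < arctan (121325 / 100000)"
      using assms(2) by (simp add: arctan_less_iff)
    ultimately show ?thesis
      by simp
  qed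
  ultimately have "0.4385 * pi < pi - 2 * arctan s" "pi - 2 * arctan s < 0.4395 * pi"
    using pi_approx by (simp_all add: t\<^sub>1_def t\<^sub>2_def power_divide)
  then have "0.4385 < 1 - 2 * arctan s / pi" "1 - 2 * arctan s / pi < 0.4395"
    by (simp_all add: field_simps)
  then show ?thesis
    unfolding abs_less_iff by simp
qed

theorem corollary6:
  fixes c :: real
  assumes "0 < c" and "c \<le> 1"
  shows "\<exists>l_opt. l_opt > 0
           \<and> (\<forall>l>0. l \<noteq> l_opt \<longrightarrow> g_c c l < g_c c l_opt)
           \<and> \<bar>l_opt * sqrt 2 / c - 2.426\<bar> < 0.0005
           \<and> \<bar>alpha_c c l_opt - 0.439\<bar> < 0.0005"
proof -
  obtain s where s_lower: "12128 / 10000 < s" and s_upper: "s < 121325 / 100000"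
    and slope_pos: "\<forall>z. 0 \<le> z \<and> z < s \<longrightarrow> 0 < speed_slope z"
    and slope_neg: "\<forall>z. s < z \<longrightarrow> speed_slope z < 0"
    using speed_slope_sign_change by blast
  define l_opt where "l_opt = s * c * sqrt 2"
  have l_opt_scaled: "l_opt / (c * sqrt 2) = s"
    using \<open>0 < c\<close> by (simp add: l_opt_def)
  have l_opt_pos: "0 < l_opt"
    using \<open>0 < c\<close> s_lower by (simp add: l_opt_def)
  have maximal: "g_c c l < g_c c l_opt" if "0 < l" "l \<noteq> l_opt" for l
  proof -
    have "l / (c * sqrt 2) \<noteq> s"
      using \<open>0 < c\<close> that by (auto simp: l_opt_def field_simps)
    then have "scaled_speed (l / (c * sqrt 2)) < scaled_speed s"
      using scaled_speed_strict_max[of s] s_lower slope_pos slope_neg \<open>0 < c\<close> \<open>0 < l\<close> by simp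
    moreover have "0 < 4 * c ^ 3 / pi"
      using \<open>0 < c\<close> by simp
    ultimately show ?thesis
      unfolding g_c_eq_scaled_speed[OF \<open>0 < c\<close>] l_opt_scaled by (rule mult_strict_left_mono)
  qed
  have "l_opt * sqrt 2 / c = 2 * s"
    using \<open>0 < c\<close> by (simp add: l_opt_def)
  then have l_opt_approx: "\<bar>l_opt * sqrt 2 / c - 2.426\<bar> < 0.0005"
    using s_lower s_upper unfolding abs_less_iff by simp
  have alpha_approx: "\<bar>alpha_c c l_opt - 0.439\<bar> < 0.0005"
    unfolding alpha_c_eq l_opt_scaled by (rule alpha_closed_form_bound[OF s_lower s_upper])
  show ?thesis
    using l_opt_pos maximal l_opt_approx alpha_approx by blast
qed

end
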